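(* Let $\eta=\frac{1+\sqrt5}{2}$ and $N=\mathbf{Z}[\eta]=\mathbf{Z}e_1\oplus\mathbf{Z}e_2$ with $e_1=1$, $e_2=\eta$. Let $b:N\times N\to\mathbf{Z}$ be a symmetric bilinear form such that $(N,b)$ is an even hyperbolic lattice and multiplication by $\eta^2$ is an isometry of $(N,b)$. Then: \begin{enumerate} \item The Gram matrix of $b$ with respect to $(e_1,e_2)$ has the form $\begin{pmatrix}2q&q\\ q&-2q\end{pmatrix}$ for some nonzero integer $q$. Conversely, for every nonzero integer $q$ this matrix defines an even hyperbolic lattice on $N$ for which multiplication by $\eta^2$ is an isometry. \item With $q$ as in (1), the discriminant group satisfies $N^*/N=\langle e_2/q\rangle\oplus\langle (e_1-2e_2)/(5q)\rangle\simeq \mathbf{Z}/q\mathbf{Z}\oplus\mathbf{Z}/5q\mathbf{Z}$. \item With $q$ as in (1), there is no $x\in N$ with $b(x,x)=0$. Moreover, there is no $x\in N$ with $b(x,x)=\pm2$ if and only if $q\neq\pm1$. \item With $q$ as in (1), multiplication by $\eta^6$ acts on $N^*/N$ as $-\mathrm{id}_{N^*/N}$ if and only if $q\in\{\pm1,\pm2\}$. \end{enumerate}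
   Context: A pair $(N,b)$, with $b$ a $\mathbf{Z}$-valued symmetric bilinear form on $N\cong\mathbf{Z}^2$, is an even hyperbolic lattice if $b(x,x)$ is even for all $x$ (equivalently, the diagonal entries of the Gram matrix are even) and the Gram matrix has signature $(1,1)$. In this case $b$ induces an embedding $N\subset N^*:=\mathrm{Hom}_{\mathbf{Z}}(N,\mathbf{Z})\subset N\otimes\mathbf{Q}$, and $N^*/N$ is called the discriminant group. A $\mathbf{Z}$-module automorphism $f$ of $N$ is an isometry if $b(f(x),f(y))=b(x,y)$ for all $x,y$. An isometry induces an automorphism of $N^*/N$ via its $\mathbf{Q}$-linear extension. Multiplication by $\eta^k$ is the $\mathbf{Z}$-module automorphism $p(\eta)\mapsto\eta^kp(\eta)$ of $N$. *)

theory Defs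
  imports Complex_Main
begin

text \<open>The lattice N = Z[eta] = Z e1 + Z e2 with e1 = 1, e2 = eta is modelled by coordinates:
  the pair (a, b) stands for a + b * eta.  N tensor Q is modelled by pairs of rationals,
  N tensor R by pairs of reals.\<close>

type_synonym lat = "int \<times> int"

definition eta :: real where "eta = (1 + sqrt 5) / 2"

definition emb :: "lat \<Rightarrow> real" where
  "emb x = real_of_int (fst x) + real_of_int (snd x) * eta"

definition e1 :: lat where "e1 = (1, 0)"
definition e2 :: lat where "e2 = (0, 1)"

text \<open>Multiplication by eta in coordinates: eta (a + b eta) = b + (a+b) eta, since eta^2 = eta + 1.\<close>
definition eta_mul :: "lat \<Rightarrow> lat" where
  "eta_mul x = (snd x, fst x + snd x)"

lemma eta_sq: "eta * eta = eta + 1"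
  unfolding eta_def by (simp add: field_simps)

lemma emb_eta_mul: "emb (eta_mul x) = eta * emb x"
  unfolding emb_def eta_mul_def by (simp add: algebra_simps mult.assoc[symmetric] eta_sq)

definition eta_mulQ :: "rat \<times> rat \<Rightarrow> rat \<times> rat" where
  "eta_mulQ y = (snd y, fst y + snd y)"

definition ofN :: "lat \<Rightarrow> rat \<times> rat" where
  "ofN x = (of_int (fst x), of_int (snd x))"

definition smul :: "int \<Rightarrow> lat \<Rightarrow> lat" where
  "smul k x = (k * fst x, k * snd x)"

definition addL :: "lat \<Rightarrow> lat \<Rightarrow> lat" where
  "addL x y = (fst x + fst y, snd x + snd y)"

definition addQ :: "rat \<times> rat \<Rightarrow> rat \<times> rat \<Rightarrow> rat \<times> rat" where
  "addQ x y = (fst x + fst y, snd x + snd y)"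

definition smulQ :: "int \<Rightarrow> rat \<times> rat \<Rightarrow> rat \<times> rat" where
  "smulQ k y = (of_int k * fst y, of_int k * snd y)"

definition symmetric_bilinear :: "(lat \<Rightarrow> lat \<Rightarrow> int) \<Rightarrow> bool" where
  "symmetric_bilinear B \<longleftrightarrow>
     (\<forall>x y z. B (addL x y) z = B x z + B y z) \<and>
     (\<forall>k x y. B (smul k x) y = k * B x y) \<and>
     (\<forall>x y. B x y = B y x)"

definition extR :: "(lat \<Rightarrow> lat \<Rightarrow> int) \<Rightarrow> real \<times> real \<Rightarrow> real \<times> real \<Rightarrow> real" where
  "extR B u v =
     fst u * fst v * of_int (B e1 e1) + fst u * snd v * of_int (B e1 e2)
   + snd u * fst v * of_int (B e2 e1) + snd u * snd v * of_int (B e2 e2)"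

definition extQ :: "(lat \<Rightarrow> lat \<Rightarrow> int) \<Rightarrow> rat \<times> rat \<Rightarrow> rat \<times> rat \<Rightarrow> rat" where
  "extQ B u v =
     fst u * fst v * of_int (B e1 e1) + fst u * snd v * of_int (B e1 e2)
   + snd u * fst v * of_int (B e2 e1) + snd u * snd v * of_int (B e2 e2)"

text \<open>Signature (1,1): over R the form is diagonalised by a basis (u, v) with
  b(u,u) > 0 and b(v,v) < 0 (Sylvester).\<close>
definition signature_1_1 :: "(lat \<Rightarrow> lat \<Rightarrow> int) \<Rightarrow> bool" where
  "signature_1_1 B \<longleftrightarrow>
     (\<exists>u v. fst u * snd v - snd u * fst v \<noteq> 0 \<and>
            extR B u u > 0 \<and> extR B v v < 0 \<and> extR B u v = 0)"

definition even_hyperbolic :: "(lat \<Rightarrow> lat \<Rightarrow> int) \<Rightarrow> bool" where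
  "even_hyperbolic B \<longleftrightarrow> symmetric_bilinear B \<and> (\<forall>x. even (B x x)) \<and> signature_1_1 B"

definition isometry :: "(lat \<Rightarrow> lat \<Rightarrow> int) \<Rightarrow> (lat \<Rightarrow> lat) \<Rightarrow> bool" where
  "isometry B f \<longleftrightarrow>
     (\<forall>x y. f (addL x y) = addL (f x) (f y)) \<and> (\<forall>k x. f (smul k x) = smul k (f x)) \<and>
     bij f \<and> (\<forall>x y. B (f x) (f y) = B x y)"

definition dual :: "(lat \<Rightarrow> lat \<Rightarrow> int) \<Rightarrow> (rat \<times> rat) set" where
  "dual B = {y. \<forall>x. extQ B y (ofN x) \<in> \<int>}"

definition inN :: "rat \<times> rat \<Rightarrow> bool" where
  "inN y \<longleftrightarrow> y \<in> range ofN"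

definition gram_form :: "int \<Rightarrow> lat \<Rightarrow> lat \<Rightarrow> int" where
  "gram_form q x y =
     2*q * fst x * fst y + q * (fst x * snd y + snd x * fst y) - 2*q * snd x * snd y"

end

theory Submission imports Defs "HOL-Computational_Algebra.Primes" begin

text \<open>Multiplication by \<open>\<eta>\<^sup>2\<close> acts on coordinates by the matrix \<open>((1,1),(1,2))\<close>; invariance of
  the Gram matrix \<open>G\<close> under it is a linear system whose solutions are exactly the multiples
  of \<open>((2,1),(1,-2))\<close>.  Hence \<open>b(x,x) = 2q (a\<^sup>2 + ab - b\<^sup>2)\<close> for \<open>x = a + b\<eta>\<close>, i.e. \<open>2q\<close> times the
  norm form of \<open>\<int>[\<eta>]\<close>, which has no nontrivial zero because \<open>\<surd>5\<close> is irrational and which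
  represents \<open>1\<close>.  The dual lattice is \<open>G\<^sup>-\<^sup>1 \<int>\<^sup>2\<close>, and \<open>det G = -5q\<^sup>2\<close> gives the discriminant group.
  Finally \<open>\<eta>\<^sup>6 + 1\<close> acts by \<open>((6,8),(8,14))\<close>, so it kills \<open>N\<^sup>*/N\<close> iff it maps the generator \<open>e\<^sub>2/q\<close>
  into \<open>N\<close>, iff \<open>q\<close> divides \<open>8\<close> and \<open>14\<close>.\<close>

lemma square_eq_5_times_square_imp_zero:
  fixes s t :: int
  assumes "s\<^sup>2 = 5 * t\<^sup>2"
  shows "t = 0"
  using assms
proof (induction "nat \<bar>t\<bar>" arbitrary: s t rule: less_induct)
  case less
  have "(5::int) dvd s\<^sup>2" using less.prems by simp
  then have "5 dvd s" using prime_dvd_power[of "5::int" s 2] by simp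
  then obtain s' where s': "s = 5 * s'" by blast
  have descent: "t\<^sup>2 = 5 * s'\<^sup>2" using less.prems s' by (simp add: power2_eq_square)
  show "t = 0"
  proof (rule ccontr)
    assume "t \<noteq> 0"
    then have "s' \<noteq> 0" using descent by auto
    then have "s'\<^sup>2 < t\<^sup>2" using descent by simp
    then have "\<bar>s'\<bar> < \<bar>t\<bar>" by (metis abs_le_square_iff not_less)
    then have "nat \<bar>s'\<bar> < nat \<bar>t\<bar>" by simp
    with less.hyps descent have "s' = 0" by blast
    with \<open>s' \<noteq> 0\<close> show False ..
  qed
qed

lemma golden_norm_eq_zero_iff:
  fixes a b :: int
  shows "a\<^sup>2 + a * b - b\<^sup>2 = 0 \<longleftrightarrow> a = 0 \<and> b = 0"
proof
  assume norm: "a\<^sup>2 + a * b - b\<^sup>2 = 0"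
  have "(2 * a + b)\<^sup>2 = 5 * b\<^sup>2" using norm by (simp add: power2_eq_square algebra_simps)
  then have "b = 0" by (rule square_eq_5_times_square_imp_zero)
  with norm show "a = 0 \<and> b = 0" by simp
qed simp

lemma eta_mul_pow2: "(eta_mul ^^ 2) x = (fst x + snd x, fst x + 2 * snd x)"
  by (simp add: eta_mul_def numeral_2_eq_2)

lemma eta_mulQ_pow6: "(eta_mulQ ^^ 6) y = (5 * fst y + 8 * snd y, 8 * fst y + 13 * snd y)"
  by (simp add: eta_mulQ_def eval_nat_numeral)

lemma bij_eta_mul_pow2: "bij (eta_mul ^^ 2)"
proof (rule o_bij[of "\<lambda>x. (2 * fst x - snd x, snd x - fst x)"])
  show "(\<lambda>x. (2 * fst x - snd x, snd x - fst x)) \<circ> (eta_mul ^^ 2) = id"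
    by (rule ext) (simp add: eta_mul_pow2)
  show "(eta_mul ^^ 2) \<circ> (\<lambda>x. (2 * fst x - snd x, snd x - fst x)) = id"
    by (rule ext) (simp add: eta_mul_pow2)
qed

lemma symmetric_bilinear_left:
  assumes "symmetric_bilinear B"
  shows "B x z = fst x * B e1 z + snd x * B e2 z"
proof -
  have "x = addL (smul (fst x) e1) (smul (snd x) e2)"
    by (simp add: addL_def smul_def e1_def e2_def)
  then have "B x z = B (addL (smul (fst x) e1) (smul (snd x) e2)) z" by simp
  also have "\<dots> = B (smul (fst x) e1) z + B (smul (snd x) e2) z"
    using assms unfolding symmetric_bilinear_def by blast
  also have "\<dots> = fst x * B e1 z + snd x * B e2 z"
    using assms unfolding symmetric_bilinear_def by metis
  finally show ?thesis .
qed

lemma symmetric_bilinear_gram_expansion: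
  assumes sb: "symmetric_bilinear B"
  shows "B x y = fst x * (fst y * B e1 e1 + snd y * B e1 e2)
               + snd x * (fst y * B e1 e2 + snd y * B e2 e2)"
proof -
  have sym: "\<And>a b. B a b = B b a" using sb unfolding symmetric_bilinear_def by blast
  have "B x y = fst x * B e1 y + snd x * B e2 y" by (rule symmetric_bilinear_left[OF sb])
  also have "B e1 y = fst y * B e1 e1 + snd y * B e2 e1"
    using symmetric_bilinear_left[OF sb, of y e1] sym by metis
  also have "B e2 y = fst y * B e1 e2 + snd y * B e2 e2"
    using symmetric_bilinear_left[OF sb, of y e2] sym by metis
  finally show ?thesis using sym[of e2 e1] by simp
qed

lemma gram_form_basis:
  "gram_form q e1 e1 = 2 * q" "gram_form q e1 e2 = q"
  "gram_form q e2 e1 = q" "gram_form q e2 e2 = -2 * q"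
  by (simp_all add: gram_form_def e1_def e2_def)

lemma eta_sq_invariant_form_eq_gram_form:
  assumes sb: "symmetric_bilinear B"
    and inv: "\<And>x y. B ((eta_mul ^^ 2) x) ((eta_mul ^^ 2) y) = B x y"
  shows "B = gram_form (B e1 e2)"
proof -
  have "B (1,1) (1,1) = B e1 e1" using inv[of e1 e1] by (simp add: eta_mul_pow2 e1_def)
  then have "B e1 e1 + 2 * B e1 e2 + B e2 e2 = B e1 e1"
    using symmetric_bilinear_gram_expansion[OF sb, of "(1,1)" "(1,1)"] by simp
  moreover have "B (1,1) (1,2) = B e1 e2"
    using inv[of e1 e2] by (simp add: eta_mul_pow2 e1_def e2_def)
  then have "B e1 e1 + 3 * B e1 e2 + 2 * B e2 e2 = B e1 e2"
    using symmetric_bilinear_gram_expansion[OF sb, of "(1,1)" "(1,2)"] by simp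
  ultimately have diag: "B e1 e1 = 2 * B e1 e2" "B e2 e2 = -2 * B e1 e2" by linarith+
  have "B x y = gram_form (B e1 e2) x y" for x y
    using symmetric_bilinear_gram_expansion[OF sb, of x y]
    unfolding diag gram_form_def by (simp add: algebra_simps)
  then show ?thesis by (intro ext) blast
qed

lemma signature_1_1_gram_form_iff: "signature_1_1 (gram_form q) \<longleftrightarrow> q \<noteq> 0"
proof
  assume sig: "signature_1_1 (gram_form q)"
  show "q \<noteq> 0"
  proof
    assume "q = 0"
    then have "extR (gram_form q) u u = 0" for u by (simp add: extR_def gram_form_basis)
    with sig show False unfolding signature_1_1_def by fastforce
  qed
next
  assume "q \<noteq> 0"
  then consider "q > 0" | "q < 0" by linarith
  then show "signature_1_1 (gram_form q)"
  proof cases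
    case 1
    then show ?thesis
      unfolding signature_1_1_def
      by (intro exI[of _ "(1,0)"] exI[of _ "(1,-2)"]) (simp add: extR_def gram_form_basis)
  next
    case 2
    then show ?thesis
      unfolding signature_1_1_def
      by (intro exI[of _ "(1,-2)"] exI[of _ "(1,0)"]) (simp add: extR_def gram_form_basis)
  qed
qed

lemma even_hyperbolic_gram_form:
  assumes "q \<noteq> 0"
  shows "even_hyperbolic (gram_form q)"
proof -
  have "symmetric_bilinear (gram_form q)"
    unfolding symmetric_bilinear_def gram_form_def addL_def smul_def by (simp add: algebra_simps)
  moreover have "gram_form q x x = 2 * (q * (fst x * fst x + fst x * snd x - snd x * snd x))" for x
    unfolding gram_form_def by (simp add: algebra_simps)
  ultimately show ?thesis
    using assms signature_1_1_gram_form_iff unfolding even_hyperbolic_def by simp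
qed

lemma isometry_gram_form_eta_mul_pow2: "isometry (gram_form q) (eta_mul ^^ 2)"
  unfolding isometry_def using bij_eta_mul_pow2
  by (simp add: eta_mul_pow2 addL_def smul_def gram_form_def algebra_simps)

lemma even_hyperbolic_eta_sq_isometry_imp_gram_form:
  assumes "even_hyperbolic B" and "isometry B (eta_mul ^^ 2)"
  obtains q where "q \<noteq> 0" and "B = gram_form q"
proof
  show B: "B = gram_form (B e1 e2)"
    using assms eta_sq_invariant_form_eq_gram_form
    unfolding even_hyperbolic_def isometry_def by blast
  show "B e1 e2 \<noteq> 0"
    using assms(1) signature_1_1_gram_form_iff B unfolding even_hyperbolic_def by metis
qed

lemma gram_form_diag: "gram_form q x x = 2 * q * ((fst x)\<^sup>2 + fst x * snd x - (snd x)\<^sup>2)"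
  unfolding gram_form_def by (simp add: algebra_simps power2_eq_square)

lemma gram_form_anisotropic:
  assumes "q \<noteq> 0"
  shows "gram_form q x x = 0 \<longleftrightarrow> x = (0, 0)"
  using assms golden_norm_eq_zero_iff[of "fst x" "snd x"] by (cases x) (simp add: gram_form_diag)

lemma gram_form_represents_pm2_iff:
  "(\<exists>x. gram_form q x x = 2 \<or> gram_form q x x = -2) \<longleftrightarrow> q = 1 \<or> q = -1"
proof
  assume "\<exists>x. gram_form q x x = 2 \<or> gram_form q x x = -2"
  then obtain x where "gram_form q x x = 2 \<or> gram_form q x x = -2" by blast
  then have "q * ((fst x)\<^sup>2 + fst x * snd x - (snd x)\<^sup>2) = 1
           \<or> q * ((fst x)\<^sup>2 + fst x * snd x - (snd x)\<^sup>2) = -1"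
    by (auto simp: gram_form_diag)
  then have "q dvd 1" by (metis dvd_minus_iff dvd_triv_left)
  then show "q = 1 \<or> q = -1" by auto
next
  assume "q = 1 \<or> q = -1"
  then show "\<exists>x. gram_form q x x = 2 \<or> gram_form q x x = -2"
    by (intro exI[of _ e1]) (auto simp: gram_form_basis)
qed

lemma inN_iff_Ints: "inN y \<longleftrightarrow> fst y \<in> \<int> \<and> snd y \<in> \<int>"
proof
  assume "inN y"
  then show "fst y \<in> \<int> \<and> snd y \<in> \<int>" unfolding inN_def ofN_def by auto
next
  assume "fst y \<in> \<int> \<and> snd y \<in> \<int>"
  then obtain a b where "fst y = of_int a" "snd y = of_int b" by (auto elim!: Ints_cases)
  then have "y = ofN (a, b)" unfolding ofN_def by (cases y) simp
  then show "inN y" unfolding inN_def by blast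
qed

lemma of_int_divide_in_Ints_iff:
  fixes n d :: int
  assumes "d \<noteq> 0"
  shows "(of_int n / of_int d :: rat) \<in> \<int> \<longleftrightarrow> d dvd n"
proof
  assume "(of_int n / of_int d :: rat) \<in> \<int>"
  then obtain k where "(of_int n / of_int d :: rat) = of_int k" by (auto elim: Ints_cases)
  then have "(of_int n :: rat) = of_int (d * k)" using assms by (simp add: field_simps)
  then have "n = d * k" by (simp only: of_int_eq_iff)
  then show "d dvd n" by simp
next
  assume "d dvd n"
  then show "(of_int n / of_int d :: rat) \<in> \<int>" using assms by auto
qed

lemma extQ_gram_form_ofN:
  "extQ (gram_form q) y (ofN x) =
     of_int (fst x) * (2 * of_int q * fst y + of_int q * snd y)
   + of_int (snd x) * (of_int q * fst y - 2 * of_int q * snd y)"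
  unfolding extQ_def ofN_def gram_form_basis by (simp add: algebra_simps)

lemma dual_gram_form_iff:
  "y \<in> dual (gram_form q) \<longleftrightarrow>
     2 * of_int q * fst y + of_int q * snd y \<in> \<int> \<and> of_int q * fst y - 2 * of_int q * snd y \<in> \<int>"
proof
  assume "y \<in> dual (gram_form q)"
  then have "\<And>x. extQ (gram_form q) y (ofN x) \<in> \<int>" unfolding dual_def by blast
  from this[of "(1,0)"] this[of "(0,1)"]
  show "2 * of_int q * fst y + of_int q * snd y \<in> \<int> \<and> of_int q * fst y - 2 * of_int q * snd y \<in> \<int>"
    unfolding extQ_gram_form_ofN by simp
qed (auto simp: dual_def extQ_gram_form_ofN intro!: Ints_add Ints_mult)

lemma dual_gram_form_obtain:
  assumes "y \<in> dual (gram_form q)"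
  obtains A C :: int where "2 * of_int q * fst y + of_int q * snd y = of_int A"
    and "of_int q * fst y - 2 * of_int q * snd y = of_int C"
  using assms unfolding dual_gram_form_iff by (auto elim!: Ints_cases)

lemma discriminant_generators_in_dual:
  assumes "q \<noteq> 0"
  shows "(0, 1 / of_int q) \<in> dual (gram_form q)"
    and "(1 / (5 * of_int q), -2 / (5 * of_int q)) \<in> dual (gram_form q)"
  using assms by (simp_all add: dual_gram_form_iff field_simps)

text \<open>Inverting \<open>G\<close>: if \<open>G y = (A, C)\<close> then \<open>y = -A (e\<^sub>2/q) - (C + 2A) ((e\<^sub>1 - 2e\<^sub>2)/(5q))\<close>.\<close>

lemma discriminant_generators_span:
  assumes q: "q \<noteq> 0" and y: "y \<in> dual (gram_form q)"
  shows "\<exists>m n. inN (addQ y (addQ (smulQ m (0, 1 / of_int q))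
                                 (smulQ n (1 / (5 * of_int q), -2 / (5 * of_int q)))))"
proof -
  obtain A C where A: "2 * of_int q * fst y + of_int q * snd y = of_int A"
    and C: "of_int q * fst y - 2 * of_int q * snd y = of_int C"
    using y by (rule dual_gram_form_obtain)
  have "addQ y (addQ (smulQ (-A) (0, 1 / of_int q))
                  (smulQ (-(C + 2 * A)) (1 / (5 * of_int q), -2 / (5 * of_int q)))) = (0, 0)"
    using A C q by (cases y) (auto simp: addQ_def smulQ_def field_simps)
  moreover have "inN (0, 0)" by (simp add: inN_iff_Ints)
  ultimately show ?thesis by metis
qed

lemma discriminant_generators_relations:
  assumes q: "q \<noteq> 0"
  shows "inN (addQ (smulQ m (0, 1 / of_int q)) (smulQ n (1 / (5 * of_int q), -2 / (5 * of_int q))))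
     \<longleftrightarrow> q dvd m \<and> 5 * q dvd n"
proof -
  let ?u = "of_int m / of_int q :: rat" and ?v = "of_int n / of_int (5 * q) :: rat"
  have "addQ (smulQ m (0, 1 / of_int q)) (smulQ n (1 / (5 * of_int q), -2 / (5 * of_int q)))
      = (?v, ?u - 2 * ?v)"
    by (simp add: addQ_def smulQ_def)
  moreover have "?v \<in> \<int> \<and> ?u - 2 * ?v \<in> \<int> \<longleftrightarrow> ?u \<in> \<int> \<and> ?v \<in> \<int>"
    by (metis Ints_add Ints_diff Ints_mult Ints_numeral diff_add_cancel)
  ultimately show ?thesis
    using q of_int_divide_in_Ints_iff[OF q, of m] of_int_divide_in_Ints_iff[of "5 * q" n]
    by (simp add: inN_iff_Ints)
qed

lemma eta6_minus_id_on_discriminant_iff: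
  assumes q: "q \<noteq> 0"
  shows "(\<forall>y \<in> dual (gram_form q). inN (addQ ((eta_mulQ ^^ 6) y) y)) \<longleftrightarrow> q \<in> {1, -1, 2, -2}"
proof
  assume "\<forall>y \<in> dual (gram_form q). inN (addQ ((eta_mulQ ^^ 6) y) y)"
  then have "inN (addQ ((eta_mulQ ^^ 6) (0, 1 / of_int q)) (0, 1 / of_int q))"
    using discriminant_generators_in_dual(1)[OF q] by blast
  then have "(of_int 8 / of_int q :: rat) \<in> \<int>" "(of_int 14 / of_int q :: rat) \<in> \<int>"
    unfolding inN_iff_Ints eta_mulQ_pow6 addQ_def by (simp_all add: field_simps)
  then have "q dvd 8" "q dvd 14" using of_int_divide_in_Ints_iff[OF q] by blast+
  then have "q dvd 2 * 8 - 14" by (intro dvd_diff dvd_mult)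
  then have "\<bar>q\<bar> \<le> 2" using dvd_imp_le_int[of 2 q] by simp
  with q show "q \<in> {1, -1, 2, -2}" by auto
next
  assume "q \<in> {1, -1, 2, -2}"
  then obtain r where "2 = q * r" by (auto intro: dvdE[of q 2])
  then have "(2 :: rat) = of_int q * of_int r" by (metis of_int_mult of_int_numeral)
  then have r: "2 / of_int q = (of_int r :: rat)" using q by (simp add: field_simps)
  show "\<forall>y \<in> dual (gram_form q). inN (addQ ((eta_mulQ ^^ 6) y) y)"
  proof
    fix y assume "y \<in> dual (gram_form q)"
    then obtain A C where A: "2 * of_int q * fst y + of_int q * snd y = of_int A"
      and C: "of_int q * fst y - 2 * of_int q * snd y = of_int C"
      by (rule dual_gram_form_obtain)
    have "addQ ((eta_mulQ ^^ 6) y) y = (of_int (r * (2 * A - C)), of_int (r * (3 * A - 2 * C)))"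
      unfolding eta_mulQ_pow6 addQ_def of_int_mult of_int_diff r[symmetric] A[symmetric] C[symmetric]
      using q by (simp add: field_simps)
    then show "inN (addQ ((eta_mulQ ^^ 6) y) y)" by (simp add: inN_iff_Ints)
  qed
qed

theorem proposition3p3:
  shows "(\<forall>B. even_hyperbolic B \<and> isometry B (eta_mul ^^ 2) \<longrightarrow>
      (\<exists>q::int. q \<noteq> 0 \<and>
         \<comment> \<open>(1) Gram matrix\<close>
         B e1 e1 = 2*q \<and> B e1 e2 = q \<and> B e2 e1 = q \<and> B e2 e2 = -2*q \<and>
         \<comment> \<open>(2) N^*/N = <e2/q> (+) <(e1-2e2)/(5q)> = Z/q (+) Z/5q\<close>
         (let u = (0::rat, 1 / of_int q);
              v = (1 / (5 * of_int q), -2 / (5 * of_int q))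
          in u \<in> dual B \<and> v \<in> dual B \<and>
             (\<forall>y \<in> dual B. \<exists>m n. inN (addQ y (addQ (smulQ m u) (smulQ n v)))) \<and>
             (\<forall>m n. inN (addQ (smulQ m u) (smulQ n v)) \<longleftrightarrow> q dvd m \<and> (5*q) dvd n)) \<and>
         \<comment> \<open>(3) isotropic and (-2)/(2)-vectors\<close>
         (\<not> (\<exists>x. x \<noteq> (0,0) \<and> B x x = 0)) \<and>
         ((\<not> (\<exists>x. B x x = 2 \<or> B x x = -2)) \<longleftrightarrow> q \<noteq> 1 \<and> q \<noteq> -1) \<and>
         \<comment> \<open>(4) eta^6 acts as -id on N^*/N\<close>
         ((\<forall>y \<in> dual B. inN (addQ ((eta_mulQ ^^ 6) y) y)) \<longleftrightarrow> q \<in> {1, -1, 2, -2}))) \<and>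
    (\<forall>q::int. q \<noteq> 0 \<longrightarrow>
       gram_form q e1 e1 = 2*q \<and> gram_form q e1 e2 = q \<and> gram_form q e2 e1 = q \<and>
       gram_form q e2 e2 = -2*q \<and>
       even_hyperbolic (gram_form q) \<and> isometry (gram_form q) (eta_mul ^^ 2))"
proof (intro conjI allI impI, goal_cases)
  case (1 B)
  then obtain q where q: "q \<noteq> 0" and B: "B = gram_form q"
    using even_hyperbolic_eta_sq_isometry_imp_gram_form by blast
  show ?case
    unfolding B Let_def
    using q gram_form_basis[of q] discriminant_generators_in_dual[OF q]
      discriminant_generators_span[OF q] discriminant_generators_relations[OF q]
      gram_form_anisotropic[OF q] gram_form_represents_pm2_iff[of q]
      eta6_minus_id_on_discriminant_iff[OF q]
    by blast
qed (simp_all add: gram_form_basis even_hyperbolic_gram_form isometry_gram_form_eta_mul_pow2)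

end
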